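(* Let $X$ be a proper, path connected metric space, let $S$ be a discrete subset of $X$, and let $x_0\in S$. Then $$\bigcup_{1\le i\le \#(S)} B_i(x_0)=X \qquad\text{and}\qquad b_i(x_0)\cap b_j(x_0)=\emptyset\ \text{ whenever } i\ne j.$$
   Context: $(X,d)$ is a metric space. It is proper if for every $x\in X$ the function $d(x,\cdot)$ is a proper map (in particular every closed ball is compact). A subset $S\subseteq X$ is discrete if every compact subset of $X$ contains only finitely many points of $S$. For $x\in X$ and $r>0$ write $N_r(x)=\{y\in X: d(x,y)<r\}$ and $C_r(x)=\{y\in X: d(x,y)=r\}$; $\#(\cdot)$ denotes cardinality. For $x_0\in S$, a positive integer $n\le\#(S)$, and $x\in X$ with $r=d(x,x_0)$, define: $x\in b_n(x_0)$ iff $\#(N_r(x)\cap S)=n-1$ and $C_r(x)\cap S=\{x_0\}$; and $x\in B_n(x_0)$ iff $\#(N_r(x)\cap S)=m$ and $\#(C_r(x)\cap S)=\ell$ for some integers $m\ge 0$, $\ell\ge 1$ with $m+1\le n\le m+\ell$. *)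

theory Defs
  imports "HOL-Analysis.Analysis" "HOL-Library.Extended_Nat"
begin

text \<open>The metric space X is the whole carrier of a type of class metric_space.\<close>

definition proper_metric :: "'a::metric_space itself \<Rightarrow> bool" where
  "proper_metric _ \<longleftrightarrow>
     (\<forall>(x::'a) K. compact K \<longrightarrow> compact {y. dist x y \<in> K})"

definition discrete_subset :: "'a::metric_space set \<Rightarrow> bool" where
  "discrete_subset S \<longleftrightarrow> (\<forall>K. compact K \<longrightarrow> finite (K \<inter> S))"

definition ecard :: "'a set \<Rightarrow> enat" where
  "ecard A = (if finite A then enat (card A) else \<infinity>)"

text \<open>b_n(x0): N_r(x) = ball x r, C_r(x) = sphere x r, r = d(x,x0).\<close>
definition small_b :: "'a::metric_space set \<Rightarrow> nat \<Rightarrow> 'a \<Rightarrow> 'a set" where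
  "small_b S n x0 = {x. finite (ball x (dist x x0) \<inter> S)
                       \<and> card (ball x (dist x x0) \<inter> S) = n - 1
                       \<and> sphere x (dist x x0) \<inter> S = {x0}}"

definition big_B :: "'a::metric_space set \<Rightarrow> nat \<Rightarrow> 'a \<Rightarrow> 'a set" where
  "big_B S n x0 = {x. \<exists>m l::nat. l \<ge> 1
                       \<and> finite (ball x (dist x x0) \<inter> S)
                       \<and> card (ball x (dist x x0) \<inter> S) = m
                       \<and> finite (sphere x (dist x x0) \<inter> S)
                       \<and> card (sphere x (dist x x0) \<inter> S) = l
                       \<and> m + 1 \<le> n \<and> n \<le> m + l}"

end

theory Submission
  imports Defs
begin

text \<open>With \<open>r = d(x, x\<^sub>0)\<close>, properness and discreteness make \<open>\<bar>N\<^sub>r(x) \<inter> S\<bar> = m\<close> and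
  \<open>\<bar>C\<^sub>r(x) \<inter> S\<bar> = \<ell>\<close> finite, and \<open>x\<^sub>0 \<in> C\<^sub>r(x)\<close> gives \<open>\<ell> \<ge> 1\<close>, so \<open>x \<in> B\<^sub>m\<^sub>+\<^sub>1(x\<^sub>0)\<close>
  with \<open>m + 1 \<le> \<bar>S\<bar>\<close>. The sets \<open>b\<^sub>n(x\<^sub>0)\<close> are disjoint because \<open>m = n - 1\<close> determines \<open>n \<ge> 1\<close>.\<close>

lemma proper_metric_compact_cball:
  fixes x :: "'a::metric_space"
  assumes "proper_metric TYPE('a)"
  shows "compact (cball x r)"
proof -
  have "compact {y. dist x y \<in> {0..r}}"
    using assms unfolding proper_metric_def by blast
  moreover have "{y. dist x y \<in> {0..r}} = cball x r"
    by auto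
  ultimately show ?thesis
    by simp
qed

lemma discrete_subset_finite_cball_Int:
  fixes x :: "'a::metric_space"
  assumes "proper_metric TYPE('a)" and "discrete_subset S"
  shows "finite (cball x r \<inter> S)"
  using assms proper_metric_compact_cball unfolding discrete_subset_def by blast

lemma mem_big_B_card_ball:
  assumes "finite (cball x (dist x x0) \<inter> S)" and "x0 \<in> S"
  shows "x \<in> big_B S (card (ball x (dist x x0) \<inter> S) + 1) x0"
proof -
  let ?r = "dist x x0"
  have finite_sphere: "finite (sphere x ?r \<inter> S)"
    by (rule finite_subset[OF _ assms(1)]) auto
  have "finite (ball x ?r \<inter> S)"
    by (rule finite_subset[OF _ assms(1)]) auto
  moreover have "x0 \<in> sphere x ?r \<inter> S"
    using \<open>x0 \<in> S\<close> by simp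
  then have "card (sphere x ?r \<inter> S) \<ge> 1"
    using finite_sphere by (metis One_nat_def Suc_leI card_gt_0_iff empty_iff)
  ultimately show ?thesis
    using finite_sphere unfolding big_B_def by auto
qed

lemma card_ball_Int_less_ecard:
  assumes "finite (cball x (dist x x0) \<inter> S)" and "x0 \<in> S"
  shows "enat (card (ball x (dist x x0) \<inter> S) + 1) \<le> ecard S"
proof (cases "finite S")
  case True
  let ?r = "dist x x0"
  have "x0 \<notin> ball x ?r"
    by (simp add: dist_commute)
  then have "card (insert x0 (ball x ?r \<inter> S)) = card (ball x ?r \<inter> S) + 1"
    using True by simp
  moreover have "card (insert x0 (ball x ?r \<inter> S)) \<le> card S"
    using True \<open>x0 \<in> S\<close> by (intro card_mono) auto
  ultimately show ?thesis
    using True by (simp add: ecard_def)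
qed (simp add: ecard_def)

lemma small_b_disjoint:
  assumes "1 \<le> i" and "1 \<le> j" and "i \<noteq> j"
  shows "small_b S i x0 \<inter> small_b S j x0 = {}"
  using assms unfolding small_b_def by auto

theorem mainTheorem2:
  fixes S :: "'a::metric_space set" and x0 :: 'a
  assumes "proper_metric TYPE('a)"
    and "path_connected (UNIV :: 'a set)"
    and "discrete_subset S"
    and "x0 \<in> S"
  shows "(\<Union>i\<in>{i::nat. 1 \<le> i \<and> enat i \<le> ecard S}. big_B S i x0) = UNIV
     \<and> (\<forall>i j::nat. 1 \<le> i \<and> enat i \<le> ecard S \<and> 1 \<le> j \<and> enat j \<le> ecard S \<and> i \<noteq> j
           \<longrightarrow> small_b S i x0 \<inter> small_b S j x0 = {})"
proof
  have "x \<in> (\<Union>i\<in>{i::nat. 1 \<le> i \<and> enat i \<le> ecard S}. big_B S i x0)" for x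
  proof -
    have "finite (cball x (dist x x0) \<inter> S)"
      using assms(1,3) by (rule discrete_subset_finite_cball_Int)
    with \<open>x0 \<in> S\<close> show ?thesis
      using mem_big_B_card_ball card_ball_Int_less_ecard by fastforce
  qed
  then show "(\<Union>i\<in>{i::nat. 1 \<le> i \<and> enat i \<le> ecard S}. big_B S i x0) = UNIV"
    by blast
qed (simp add: small_b_disjoint)

end
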